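(* With $H$ and the induced comodules as in the context, let $f\in F$, let $V$ be a simple right $\Bbbk^{G_f}_{\tau_f}$-comodule and $\tilde V=(V\otimes\Bbbk f)\Box_{H'_f}H$ the induced right $H$-comodule. If $\tilde V^*\cong\tilde V$, then $G_{f,f^{-1}}=\{g\in G\mid g\triangleright f=f^{-1}\}\neq\emptyset$.
   Context: Standing setup: $\Bbbk$ is an algebraically closed field of characteristic $0$, $F$ a group (possibly infinite), $G$ a finite group, and $(F,G,\triangleleft,\triangleright)$ a matched pair: $\triangleright:G\times F\to F$ a left action of $G$ on the set $F$, $\triangleleft:G\times F\to G$ a right action of $F$ on the set $G$, with $g\triangleright(ff')=(g\triangleright f)((g\triangleleft f)\triangleright f')$ and $(gg')\triangleleft f=(g\triangleleft(g'\triangleright f))(g'\triangleleft f)$. Maps $\sigma:G\times F\times F\to\Bbbk^\times$ and $\tau:G\times G\times F\to\Bbbk^\times$ satisfy: $\sigma(g;1_F,f)=\sigma(g;f,1_F)=\sigma(1_G;f,f')=1$; $\sigma(g\triangleleft f;f',f'')\sigma(g;f,f'f'')=\sigma(g;f,f')\sigma(g;ff',f'')$; $\tau(1_G,g;f)=\tau(g,1_G;f)=\tau(g,g';1_F)=1$; $\tau(g,g';g''\triangleright f)\tau(gg',g'';f)=\tau(g,g'g'';f)\tau(g',g'';f)$; and $\sigma(gg';f,f')\tau(g,g';ff')=\sigma(g;g'\triangleright f,(g'\triangleleft f)\triangleright f')\sigma(g';f,f')\tau(g,g';f)\tau(g\triangleleft(g'\triangleright f),g'\triangleleft f;f')$.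 $H=\Bbbk^G{}^\tau\#_\sigma\Bbbk F$ has basis $\{p_g\#f\}$, product $(p_g\#f)(p_{g'}\#f')=\delta_{g\triangleleft f,g'}\sigma(g;f,f')p_g\#ff'$, coproduct $\Delta(p_g\#f)=\sum_{x\in G}\tau(gx^{-1},x;f)\,p_{gx^{-1}}\#(x\triangleright f)\otimes p_x\#f$, counit $\varepsilon(p_g\#f)=\delta_{g,1_G}$, antipode $S(p_g\#f)=\sigma(g^{-1};g\triangleright f,(g\triangleright f)^{-1})^{-1}\tau(g^{-1},g;f)^{-1}p_{(g\triangleleft f)^{-1}}\#(g\triangleright f)^{-1}$. $G_f=\{g\in G\mid g\triangleright f=f\}$; $\Bbbk^{G_f}_{\tau_f}$ is the coalgebra with basis $\{p_g\}_{g\in G_f}$, $\Delta(p_g)=\sum_{x\in G_f}\tau(gx^{-1},x;f)p_{gx^{-1}}\otimes p_x$, $\varepsilon(p_g)=\delta_{g,1_G}$; $H'_f$ is the coalgebra with basis $\{p_g\#f'\mid g\in G_f,f'\in F\}$, $\Delta(p_g\#f')=\sum_{x\in G_f}\tau(gx^{-1},x;f')p_{gx^{-1}}\#(x\triangleright f')\otimes p_x\#f'$; $H$ is a left $H'_f$-comodule via $(\pi_f\otimes\mathrm{id})\Delta$ ($\pi_f$ kills $p_g\#f'$, $g\notin G_f$). $V\otimes\Bbbk f$ is a right $H'_f$-comodule via $v\otimes f\mapsto\sum_gv_g\otimes f\otimes p_g\#f$ where $\rho(v)=\sum_{g\in G_f}v_g\otimes p_g$; $\tilde V$ is the cotensor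 product with right $H$-coaction $\mathrm{id}\otimes\Delta$, and $\tilde V^*$ its dual comodule. *)

theory Defs
  imports "HOL-Algebra.Group" "HOL-Computational_Algebra.Polynomial" "HOL-Library.Function_Algebras"
begin

definition alg_closed_field :: "'k::field itself \<Rightarrow> bool" where
  "alg_closed_field _ \<longleftrightarrow> (\<forall>p :: 'k poly. degree p \<ge> 1 \<longrightarrow> (\<exists>x. poly p x = 0))"

text \<open>Every k-vector space is isomorphic to a subspace of some function space
  'c => k (with pointwise operations); vectors are represented that way.\<close>

definition sc :: "'k::field \<Rightarrow> ('c \<Rightarrow> 'k) \<Rightarrow> ('c \<Rightarrow> 'k)" where
  "sc c v = (\<lambda>x. c * v x)"

definition subspace :: "('c \<Rightarrow> 'k::field) set \<Rightarrow> bool" where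
  "subspace W \<longleftrightarrow> 0 \<in> W \<and> (\<forall>v\<in>W. \<forall>w\<in>W. v + w \<in> W) \<and> (\<forall>c. \<forall>v\<in>W. sc c v \<in> W)"

text \<open>A coalgebra C with basis B (indexed by type 'b) is given by the structure constants
  Dc b b1 b2 of the coproduct, Delta(b) = sum Dc b b1 b2 (b1 (x) b2), and the counit eps.
  For a right C-comodule W (a subspace of 'c => k), W (x) C is identified with finitely
  supported functions B => W; the coaction rho w = sum_b (rho w b) (x) b.\<close>

definition vsupp :: "('b \<Rightarrow> ('c \<Rightarrow> 'k::zero)) \<Rightarrow> 'b set" where
  "vsupp X = {b. X b \<noteq> 0}"

definition is_linear_map :: "('c \<Rightarrow> 'k::field) set \<Rightarrow> (('c \<Rightarrow> 'k) \<Rightarrow> ('d \<Rightarrow> 'k)) \<Rightarrow> bool" where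
  "is_linear_map W T \<longleftrightarrow> (\<forall>v\<in>W. \<forall>w\<in>W. T (v + w) = T v + T w) \<and> (\<forall>c. \<forall>w\<in>W. T (sc c w) = sc c (T w))"

definition is_linear_functional :: "('c \<Rightarrow> 'k::field) set \<Rightarrow> (('c \<Rightarrow> 'k) \<Rightarrow> 'k) \<Rightarrow> bool" where
  "is_linear_functional W \<phi> \<longleftrightarrow> (\<forall>v\<in>W. \<forall>w\<in>W. \<phi> (v + w) = \<phi> v + \<phi> w) \<and> (\<forall>c. \<forall>w\<in>W. \<phi> (sc c w) = c * \<phi> w)"

definition right_comodule ::
  "'b set \<Rightarrow> ('b \<Rightarrow> 'b \<Rightarrow> 'b \<Rightarrow> 'k::field) \<Rightarrow> ('b \<Rightarrow> 'k) \<Rightarrow> ('c \<Rightarrow> 'k) set \<Rightarrow> (('c \<Rightarrow> 'k) \<Rightarrow> 'b \<Rightarrow> ('c \<Rightarrow> 'k)) \<Rightarrow> bool" where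
  "right_comodule B Dc eps W rho \<longleftrightarrow>
     subspace W \<and>
     (\<forall>w\<in>W. finite (vsupp (rho w)) \<and> vsupp (rho w) \<subseteq> B \<and> (\<forall>b. rho w b \<in> W)) \<and>
     (\<forall>v\<in>W. \<forall>w\<in>W. \<forall>b. rho (v + w) b = rho v b + rho w b) \<and>
     (\<forall>c. \<forall>w\<in>W. \<forall>b. rho (sc c w) b = sc c (rho w b)) \<and>
     (\<forall>w\<in>W. (\<Sum>b\<in>vsupp (rho w). sc (eps b) (rho w b)) = w) \<and>
     (\<forall>w\<in>W. \<forall>b1 b2. rho (rho w b1) b2 = (\<Sum>b\<in>vsupp (rho w). sc (Dc b b2 b1) (rho w b)))"

definition subcomodule :: "('c \<Rightarrow> 'k::field) set \<Rightarrow> (('c \<Rightarrow> 'k) \<Rightarrow> 'b \<Rightarrow> ('c \<Rightarrow> 'k)) \<Rightarrow> ('c \<Rightarrow> 'k) set \<Rightarrow> bool" where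
  "subcomodule W rho U \<longleftrightarrow> subspace U \<and> U \<subseteq> W \<and> (\<forall>u\<in>U. \<forall>b. rho u b \<in> U)"

definition simple_right_comodule ::
  "'b set \<Rightarrow> ('b \<Rightarrow> 'b \<Rightarrow> 'b \<Rightarrow> 'k::field) \<Rightarrow> ('b \<Rightarrow> 'k) \<Rightarrow> ('c \<Rightarrow> 'k) set \<Rightarrow> (('c \<Rightarrow> 'k) \<Rightarrow> 'b \<Rightarrow> ('c \<Rightarrow> 'k)) \<Rightarrow> bool" where
  "simple_right_comodule B Dc eps W rho \<longleftrightarrow>
     right_comodule B Dc eps W rho \<and> W \<noteq> {0} \<and>
     (\<forall>U. subcomodule W rho U \<longrightarrow> U = {0} \<or> U = W)"

definition comodule_iso ::
  "('c \<Rightarrow> 'k::field) set \<Rightarrow> (('c \<Rightarrow> 'k) \<Rightarrow> 'b \<Rightarrow> ('c \<Rightarrow> 'k)) \<Rightarrow>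
   ('d \<Rightarrow> 'k) set \<Rightarrow> (('d \<Rightarrow> 'k) \<Rightarrow> 'b \<Rightarrow> ('d \<Rightarrow> 'k)) \<Rightarrow> bool" where
  "comodule_iso W1 rho1 W2 rho2 \<longleftrightarrow>
     (\<exists>T. bij_betw T W1 W2 \<and> is_linear_map W1 T \<and> (\<forall>w\<in>W1. \<forall>b. T (rho1 w b) = rho2 (T w) b))"

text \<open>Dual comodule of a (finite-dimensional) right comodule W over a Hopf algebra whose
  antipode has structure constants Sc (S(b') = sum_b Sc b' b  b):
  W* = linear functionals on W (extended by 0 outside W), with
  <phi_0, w> phi_1 = <phi, w_0> S(w_1).\<close>
definition dual_space :: "('c \<Rightarrow> 'k::field) set \<Rightarrow> ((('c \<Rightarrow> 'k) \<Rightarrow> 'k)) set" where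
  "dual_space W = {\<phi>. is_linear_functional W \<phi> \<and> (\<forall>x. x \<notin> W \<longrightarrow> \<phi> x = 0)}"

definition dual_coaction ::
  "('b \<Rightarrow> 'b \<Rightarrow> 'k::field) \<Rightarrow> ('c \<Rightarrow> 'k) set \<Rightarrow> (('c \<Rightarrow> 'k) \<Rightarrow> 'b \<Rightarrow> ('c \<Rightarrow> 'k)) \<Rightarrow>
   (('c \<Rightarrow> 'k) \<Rightarrow> 'k) \<Rightarrow> 'b \<Rightarrow> (('c \<Rightarrow> 'k) \<Rightarrow> 'k)" where
  "dual_coaction Sc W rho \<phi> b =
     (\<lambda>w. if w \<in> W then (\<Sum>b'\<in>vsupp (rho w). \<phi> (rho w b') * Sc b' b) else 0)"

definition matched_pair_data ::
  "('f, 'x) monoid_scheme \<Rightarrow> ('g, 'y) monoid_scheme \<Rightarrow> ('g \<Rightarrow> 'f \<Rightarrow> 'f) \<Rightarrow> ('g \<Rightarrow> 'f \<Rightarrow> 'g) \<Rightarrow>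
   ('g \<Rightarrow> 'f \<Rightarrow> 'f \<Rightarrow> 'k::field) \<Rightarrow> ('g \<Rightarrow> 'g \<Rightarrow> 'f \<Rightarrow> 'k) \<Rightarrow> bool" where
  "matched_pair_data F G act ract \<sigma> \<tau> \<longleftrightarrow>
     group F \<and> group G \<and> finite (carrier G) \<and>
     \<comment> \<open>left action of G on the set F\<close>
     (\<forall>g\<in>carrier G. \<forall>f\<in>carrier F. act g f \<in> carrier F) \<and>
     (\<forall>f\<in>carrier F. act \<one>\<^bsub>G\<^esub> f = f) \<and>
     (\<forall>g\<in>carrier G. \<forall>g'\<in>carrier G. \<forall>f\<in>carrier F. act (g \<otimes>\<^bsub>G\<^esub> g') f = act g (act g' f)) \<and>
     \<comment> \<open>right action of F on the set G\<close>
     (\<forall>g\<in>carrier G. \<forall>f\<in>carrier F. ract g f \<in> carrier G) \<and>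
     (\<forall>g\<in>carrier G. ract g \<one>\<^bsub>F\<^esub> = g) \<and>
     (\<forall>g\<in>carrier G. \<forall>f\<in>carrier F. \<forall>f'\<in>carrier F. ract g (f \<otimes>\<^bsub>F\<^esub> f') = ract (ract g f) f') \<and>
     \<comment> \<open>matched pair compatibilities\<close>
     (\<forall>g\<in>carrier G. \<forall>f\<in>carrier F. \<forall>f'\<in>carrier F.
        act g (f \<otimes>\<^bsub>F\<^esub> f') = act g f \<otimes>\<^bsub>F\<^esub> act (ract g f) f') \<and>
     (\<forall>g\<in>carrier G. \<forall>g'\<in>carrier G. \<forall>f\<in>carrier F.
        ract (g \<otimes>\<^bsub>G\<^esub> g') f = ract g (act g' f) \<otimes>\<^bsub>G\<^esub> ract g' f) \<and>
     \<comment> \<open>sigma\<close>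
     (\<forall>g\<in>carrier G. \<forall>f\<in>carrier F. \<forall>f'\<in>carrier F. \<sigma> g f f' \<noteq> 0) \<and>
     (\<forall>g\<in>carrier G. \<forall>f\<in>carrier F. \<sigma> g \<one>\<^bsub>F\<^esub> f = 1 \<and> \<sigma> g f \<one>\<^bsub>F\<^esub> = 1) \<and>
     (\<forall>f\<in>carrier F. \<forall>f'\<in>carrier F. \<sigma> \<one>\<^bsub>G\<^esub> f f' = 1) \<and>
     (\<forall>g\<in>carrier G. \<forall>f\<in>carrier F. \<forall>f'\<in>carrier F. \<forall>f''\<in>carrier F.
        \<sigma> (ract g f) f' f'' * \<sigma> g f (f' \<otimes>\<^bsub>F\<^esub> f'') = \<sigma> g f f' * \<sigma> g (f \<otimes>\<^bsub>F\<^esub> f') f'') \<and>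
     \<comment> \<open>tau\<close>
     (\<forall>g\<in>carrier G. \<forall>g'\<in>carrier G. \<forall>f\<in>carrier F. \<tau> g g' f \<noteq> 0) \<and>
     (\<forall>g\<in>carrier G. \<forall>f\<in>carrier F. \<tau> \<one>\<^bsub>G\<^esub> g f = 1 \<and> \<tau> g \<one>\<^bsub>G\<^esub> f = 1) \<and>
     (\<forall>g\<in>carrier G. \<forall>g'\<in>carrier G. \<tau> g g' \<one>\<^bsub>F\<^esub> = 1) \<and>
     (\<forall>g\<in>carrier G. \<forall>g'\<in>carrier G. \<forall>g''\<in>carrier G. \<forall>f\<in>carrier F.
        \<tau> g g' (act g'' f) * \<tau> (g \<otimes>\<^bsub>G\<^esub> g') g'' f = \<tau> g (g' \<otimes>\<^bsub>G\<^esub> g'') f * \<tau> g' g'' f) \<and>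
     \<comment> \<open>compatibility of sigma and tau\<close>
     (\<forall>g\<in>carrier G. \<forall>g'\<in>carrier G. \<forall>f\<in>carrier F. \<forall>f'\<in>carrier F.
        \<sigma> (g \<otimes>\<^bsub>G\<^esub> g') f f' * \<tau> g g' (f \<otimes>\<^bsub>F\<^esub> f') =
        \<sigma> g (act g' f) (act (ract g' f) f') * \<sigma> g' f f' * \<tau> g g' f *
        \<tau> (ract g (act g' f)) (ract g' f) f')"

text \<open>Basis of H = k^G{tau} #_sigma kF: the elements p_g # f, indexed by (g,f).\<close>
definition H_basis :: "('f, 'x) monoid_scheme \<Rightarrow> ('g, 'y) monoid_scheme \<Rightarrow> ('g \<times> 'f) set" where
  "H_basis F G = carrier G \<times> carrier F"

text \<open>Coproduct structure constants of H:
  Delta(p_g # f) = sum_{x in G} tau(g x^-1, x; f) p_{g x^-1} # (x |> f) (x) p_x # f.\<close>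
definition H_Dc ::
  "('f, 'x) monoid_scheme \<Rightarrow> ('g, 'y) monoid_scheme \<Rightarrow> ('g \<Rightarrow> 'f \<Rightarrow> 'f) \<Rightarrow> ('g \<Rightarrow> 'g \<Rightarrow> 'f \<Rightarrow> 'k::field) \<Rightarrow>
   'g \<times> 'f \<Rightarrow> 'g \<times> 'f \<Rightarrow> 'g \<times> 'f \<Rightarrow> 'k" where
  "H_Dc F G act \<tau> b b1 b2 =
     (if b \<in> H_basis F G \<and> b1 \<in> H_basis F G \<and> b2 \<in> H_basis F G \<and>
         fst b1 = fst b \<otimes>\<^bsub>G\<^esub> inv\<^bsub>G\<^esub> (fst b2) \<and> snd b1 = act (fst b2) (snd b) \<and> snd b2 = snd b
      then \<tau> (fst b1) (fst b2) (snd b) else 0)"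

text \<open>Antipode structure constants of H:
  S(p_g # f) = sigma(g^-1; g|>f, (g|>f)^-1)^-1 tau(g^-1, g; f)^-1 p_{(g<|f)^-1} # (g|>f)^-1.\<close>
definition H_Sc ::
  "('f, 'x) monoid_scheme \<Rightarrow> ('g, 'y) monoid_scheme \<Rightarrow> ('g \<Rightarrow> 'f \<Rightarrow> 'f) \<Rightarrow> ('g \<Rightarrow> 'f \<Rightarrow> 'g) \<Rightarrow>
   ('g \<Rightarrow> 'f \<Rightarrow> 'f \<Rightarrow> 'k::field) \<Rightarrow> ('g \<Rightarrow> 'g \<Rightarrow> 'f \<Rightarrow> 'k) \<Rightarrow> 'g \<times> 'f \<Rightarrow> 'g \<times> 'f \<Rightarrow> 'k" where
  "H_Sc F G act ract \<sigma> \<tau> b b' =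
     (let g = fst b; f = snd b in
      if b \<in> H_basis F G \<and> b' = (inv\<^bsub>G\<^esub> (ract g f), inv\<^bsub>F\<^esub> (act g f))
      then inverse (\<sigma> (inv\<^bsub>G\<^esub> g) (act g f) (inv\<^bsub>F\<^esub> (act g f)) * \<tau> (inv\<^bsub>G\<^esub> g) g f)
      else 0)"

definition stab :: "('f, 'x) monoid_scheme \<Rightarrow> ('g, 'y) monoid_scheme \<Rightarrow> ('g \<Rightarrow> 'f \<Rightarrow> 'f) \<Rightarrow> 'f \<Rightarrow> 'g set" where
  "stab F G act f = {g \<in> carrier G. act g f = f}"

text \<open>Delta(p_g) = sum_{x in G_f} tau(g x^-1, x; f) p_{g x^-1} (x) p_x.\<close>
definition Gf_Dc ::
  "('f, 'x) monoid_scheme \<Rightarrow> ('g, 'y) monoid_scheme \<Rightarrow> ('g \<Rightarrow> 'f \<Rightarrow> 'f) \<Rightarrow> ('g \<Rightarrow> 'g \<Rightarrow> 'f \<Rightarrow> 'k::field) \<Rightarrow>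
   'f \<Rightarrow> 'g \<Rightarrow> 'g \<Rightarrow> 'g \<Rightarrow> 'k" where
  "Gf_Dc F G act \<tau> f g a x =
     (if g \<in> stab F G act f \<and> a \<in> stab F G act f \<and> x \<in> stab F G act f \<and> a = g \<otimes>\<^bsub>G\<^esub> inv\<^bsub>G\<^esub> x
      then \<tau> a x f else 0)"

definition Gf_eps :: "('g, 'y) monoid_scheme \<Rightarrow> 'g \<Rightarrow> 'k::field" where
  "Gf_eps G g = (if g = \<one>\<^bsub>G\<^esub> then 1 else 0)"

definition Hf_basis :: "('f, 'x) monoid_scheme \<Rightarrow> ('g, 'y) monoid_scheme \<Rightarrow> ('g \<Rightarrow> 'f \<Rightarrow> 'f) \<Rightarrow> 'f \<Rightarrow> ('g \<times> 'f) set" where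
  "Hf_basis F G act f = stab F G act f \<times> carrier F"

text \<open>Left H'_f-coaction on H, (pi_f (x) id) Delta, via structure constants:
  lambda(b) = sum_{c, b'} Hl c b' (c (x) b').\<close>
definition H_left_Hf ::
  "('f, 'x) monoid_scheme \<Rightarrow> ('g, 'y) monoid_scheme \<Rightarrow> ('g \<Rightarrow> 'f \<Rightarrow> 'f) \<Rightarrow> ('g \<Rightarrow> 'g \<Rightarrow> 'f \<Rightarrow> 'k::field) \<Rightarrow>
   'f \<Rightarrow> 'g \<times> 'f \<Rightarrow> 'g \<times> 'f \<Rightarrow> 'g \<times> 'f \<Rightarrow> 'k" where
  "H_left_Hf F G act \<tau> f b c b' = (if c \<in> Hf_basis F G act f then H_Dc F G act \<tau> b c b' else 0)"

text \<open>Since kf is one-dimensional, V (x) kf is identified with V (v (x) f <-> v); its right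
  H'_f-coaction is v (x) f |-> sum_g v_g (x) f (x) p_g # f.
  Elements of (V (x) kf) (x) H are finitely supported functions from the basis of H into V;
  such a function X is encoded as Y :: ((g,f),a) => k with slice Y b = X b.\<close>

definition slice :: "('b \<times> 'a \<Rightarrow> 'k) \<Rightarrow> 'b \<Rightarrow> ('a \<Rightarrow> 'k)" where
  "slice Y b = (\<lambda>a. Y (b, a))"

definition Vf_coaction ::
  "'f \<Rightarrow> (('a \<Rightarrow> 'k::field) \<Rightarrow> 'g \<Rightarrow> ('a \<Rightarrow> 'k)) \<Rightarrow> ('a \<Rightarrow> 'k) \<Rightarrow> 'g \<times> 'f \<Rightarrow> ('a \<Rightarrow> 'k)" where
  "Vf_coaction f rho v c = (if snd c = f then rho v (fst c) else 0)"

definition induced_space ::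
  "('f, 'x) monoid_scheme \<Rightarrow> ('g, 'y) monoid_scheme \<Rightarrow> ('g \<Rightarrow> 'f \<Rightarrow> 'f) \<Rightarrow> ('g \<Rightarrow> 'g \<Rightarrow> 'f \<Rightarrow> 'k::field) \<Rightarrow>
   'f \<Rightarrow> ('a \<Rightarrow> 'k) set \<Rightarrow> (('a \<Rightarrow> 'k) \<Rightarrow> 'g \<Rightarrow> ('a \<Rightarrow> 'k)) \<Rightarrow> (('g \<times> 'f) \<times> 'a \<Rightarrow> 'k) set" where
  "induced_space F G act \<tau> f V rho =
     {Y. (\<forall>b. slice Y b \<in> V) \<and> finite (vsupp (slice Y)) \<and> vsupp (slice Y) \<subseteq> H_basis F G \<and>
         (\<forall>c\<in>Hf_basis F G act f. \<forall>b'\<in>H_basis F G.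
            Vf_coaction f rho (slice Y b') c =
            (\<Sum>b\<in>vsupp (slice Y). sc (H_left_Hf F G act \<tau> f b c b') (slice Y b)))}"

definition induced_coaction ::
  "('f, 'x) monoid_scheme \<Rightarrow> ('g, 'y) monoid_scheme \<Rightarrow> ('g \<Rightarrow> 'f \<Rightarrow> 'f) \<Rightarrow> ('g \<Rightarrow> 'g \<Rightarrow> 'f \<Rightarrow> 'k::field) \<Rightarrow>
   (('g \<times> 'f) \<times> 'a \<Rightarrow> 'k) \<Rightarrow> 'g \<times> 'f \<Rightarrow> (('g \<times> 'f) \<times> 'a \<Rightarrow> 'k)" where
  "induced_coaction F G act \<tau> Y b1 =
     (\<lambda>(b2, a). \<Sum>b\<in>vsupp (slice Y). H_Dc F G act \<tau> b b2 b1 * Y (b, a))"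

end

theory Submission
  imports Defs
begin

(* Every element of the induced comodule tilde V is supported on basis vectors p_g # f' with
   g |> f' = f, so every basis vector of H occurring in its coaction has F-component in the
   orbit G |> f; and as V <> 0, some p_1 # f' with f' in G |> f does occur.  The coaction of
   the dual comodule is that of tilde V followed by the antipode, which sends p_x # f'' to a
   multiple of a basis vector with F-component (x |> f'')^-1.  Since (g |> f)^-1 = (g <| f) |> f^-1,
   the basis vectors occurring in the dual have F-component in G |> f^-1.  An isomorphism
   preserves the occurring basis vectors, so f' lies in both orbits and f^-1 in G |> f. *)

lemma sc_zero_left [simp]: "sc 0 v = 0"
  and sc_zero_right [simp]: "sc c 0 = 0"
  and sc_one [simp]: "sc 1 v = v"
  by (auto simp: sc_def fun_eq_iff)

lemma sum_vsupp_sc_single: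
  assumes "finite (vsupp X)" and "\<And>b. b \<noteq> a \<Longrightarrow> k b = 0"
  shows "(\<Sum>b\<in>vsupp X. sc (k b) (X b)) = sc (k a) (X a)"
proof -
  have "(\<Sum>b\<in>vsupp X. sc (k b) (X b)) = (\<Sum>b\<in>vsupp X. if b = a then sc (k a) (X a) else 0)"
    using assms(2) by (intro sum.cong) auto
  also have "\<dots> = sc (k a) (X a)"
    using assms(1) by (simp add: vsupp_def)
  finally show ?thesis .
qed

definition coaction_support :: "('c \<Rightarrow> 'k::zero) set \<Rightarrow> (('c \<Rightarrow> 'k) \<Rightarrow> 'b \<Rightarrow> ('c \<Rightarrow> 'k)) \<Rightarrow> 'b set" where
  "coaction_support W rho = {b. \<exists>w\<in>W. rho w b \<noteq> 0}"

lemma right_comodule_coaction_zero: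
  assumes "right_comodule B Dc eps W rho"
  shows "rho 0 b = 0"
proof -
  have "0 \<in> W" and "\<forall>c. \<forall>w\<in>W. \<forall>b. rho (sc c w) b = sc c (rho w b)"
    using assms by (auto simp: right_comodule_def subspace_def)
  then have "rho (sc 0 0) b = sc 0 (rho 0 b)" by blast
  then show ?thesis by simp
qed

lemma right_comodule_coaction_nonzero:
  assumes "right_comodule B Dc eps W rho" and "w \<in> W" and "w \<noteq> 0"
  obtains b where "b \<in> B" and "rho w b \<noteq> 0"
proof -
  have "vsupp (rho w) \<noteq> {}"
  proof
    assume "vsupp (rho w) = {}"
    moreover have "(\<Sum>b\<in>vsupp (rho w). sc (eps b) (rho w b)) = w"
      using assms(1,2) by (simp add: right_comodule_def)
    ultimately show False using assms(3) by simp
  qed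
  moreover have "vsupp (rho w) \<subseteq> B"
    using assms(1,2) by (simp add: right_comodule_def)
  ultimately show thesis using that by (auto simp: vsupp_def)
qed

lemma comodule_iso_coaction_support:
  assumes "comodule_iso W1 rho1 W2 rho2"
  shows "coaction_support W2 rho2 \<subseteq> coaction_support W1 rho1"
proof
  fix b assume "b \<in> coaction_support W2 rho2"
  then obtain w2 where "w2 \<in> W2" and nz: "rho2 w2 b \<noteq> 0"
    by (auto simp: coaction_support_def)
  obtain T where T: "bij_betw T W1 W2" "is_linear_map W1 T"
    and T_rho: "\<forall>w\<in>W1. \<forall>b. T (rho1 w b) = rho2 (T w) b"
    using assms by (auto simp: comodule_iso_def)
  obtain w1 where w1: "w1 \<in> W1" "T w1 = w2"
    using T(1) \<open>w2 \<in> W2\<close> by (auto simp: bij_betw_def)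
  have "T 0 = 0"
    using T(2) w1(1) unfolding is_linear_map_def by (metis sc_zero_left)
  then have "rho1 w1 b \<noteq> 0"
    using T_rho w1 nz by metis
  with w1(1) show "b \<in> coaction_support W1 rho1"
    by (auto simp: coaction_support_def)
qed

lemma dual_coaction_support:
  "coaction_support (dual_space W) (dual_coaction Sc W rho) \<subseteq>
     {b. \<exists>b'\<in>coaction_support W rho. Sc b' b \<noteq> 0}"
proof
  fix b assume "b \<in> coaction_support (dual_space W) (dual_coaction Sc W rho)"
  then obtain \<phi> w where "dual_coaction Sc W rho \<phi> b w \<noteq> 0"
    by (auto simp: coaction_support_def fun_eq_iff)
  then have "w \<in> W" and "(\<Sum>b'\<in>vsupp (rho w). \<phi> (rho w b') * Sc b' b) \<noteq> 0"
    by (auto simp: dual_coaction_def split: if_splits)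
  then obtain b' where "b' \<in> vsupp (rho w)" and "Sc b' b \<noteq> 0"
    by (metis (no_types, lifting) mult_zero_right sum.neutral)
  with \<open>w \<in> W\<close> show "b \<in> {b. \<exists>b'\<in>coaction_support W rho. Sc b' b \<noteq> 0}"
    by (auto simp: coaction_support_def vsupp_def)
qed

lemma H_Sc_nonzero:
  assumes "H_Sc F G act ract \<sigma> \<tau> b' b \<noteq> 0"
  shows "b' \<in> H_basis F G" and "snd b = inv\<^bsub>F\<^esub> (act (fst b') (snd b'))"
  using assms by (auto simp: H_Sc_def Let_def split: if_splits)

lemma H_Dc_nonzero_snd:
  assumes "H_Dc F G act \<tau> b b1 b2 \<noteq> 0"
  shows "snd b2 = snd b"
  using assms by (auto simp: H_Dc_def split: if_splits)

locale matched_pair =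
  fixes F :: "('f, 'x) monoid_scheme" and G :: "('g, 'y) monoid_scheme"
    and act :: "'g \<Rightarrow> 'f \<Rightarrow> 'f" and ract :: "'g \<Rightarrow> 'f \<Rightarrow> 'g"
    and \<sigma> :: "'g \<Rightarrow> 'f \<Rightarrow> 'f \<Rightarrow> 'k::field" and \<tau> :: "'g \<Rightarrow> 'g \<Rightarrow> 'f \<Rightarrow> 'k"
  assumes matched_pair: "matched_pair_data F G act ract \<sigma> \<tau>"
begin

sublocale F: group F
  using matched_pair by (simp add: matched_pair_data_def)

sublocale G: group G
  using matched_pair by (simp add: matched_pair_data_def)

lemma finite_carrier_G: "finite (carrier G)"
  using matched_pair by (simp add: matched_pair_data_def)

lemma act_closed [simp]: "g \<in> carrier G \<Longrightarrow> x \<in> carrier F \<Longrightarrow> act g x \<in> carrier F"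
  using matched_pair by (simp add: matched_pair_data_def)

lemma act_one [simp]: "x \<in> carrier F \<Longrightarrow> act \<one>\<^bsub>G\<^esub> x = x"
  using matched_pair by (simp add: matched_pair_data_def)

lemma act_mult:
  "g \<in> carrier G \<Longrightarrow> h \<in> carrier G \<Longrightarrow> x \<in> carrier F \<Longrightarrow> act (g \<otimes>\<^bsub>G\<^esub> h) x = act g (act h x)"
  using matched_pair by (simp add: matched_pair_data_def)

lemma ract_closed [simp]: "g \<in> carrier G \<Longrightarrow> x \<in> carrier F \<Longrightarrow> ract g x \<in> carrier G"
  using matched_pair by (simp add: matched_pair_data_def)

lemma ract_one [simp]: "g \<in> carrier G \<Longrightarrow> ract g \<one>\<^bsub>F\<^esub> = g"
  using matched_pair by (simp add: matched_pair_data_def)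

lemma act_F_mult:
  "g \<in> carrier G \<Longrightarrow> x \<in> carrier F \<Longrightarrow> y \<in> carrier F \<Longrightarrow>
     act g (x \<otimes>\<^bsub>F\<^esub> y) = act g x \<otimes>\<^bsub>F\<^esub> act (ract g x) y"
  using matched_pair by (simp add: matched_pair_data_def)

lemma tau_one [simp]:
  "g \<in> carrier G \<Longrightarrow> x \<in> carrier F \<Longrightarrow> \<tau> \<one>\<^bsub>G\<^esub> g x = 1"
  "g \<in> carrier G \<Longrightarrow> x \<in> carrier F \<Longrightarrow> \<tau> g \<one>\<^bsub>G\<^esub> x = 1"
  using matched_pair by (simp_all add: matched_pair_data_def)

lemma act_inv_act [simp]:
  "g \<in> carrier G \<Longrightarrow> x \<in> carrier F \<Longrightarrow> act (inv\<^bsub>G\<^esub> g) (act g x) = x"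
  by (simp flip: act_mult)

lemma act_F_one [simp]: "g \<in> carrier G \<Longrightarrow> act g \<one>\<^bsub>F\<^esub> = \<one>\<^bsub>F\<^esub>"
proof -
  assume g: "g \<in> carrier G"
  have "act g \<one>\<^bsub>F\<^esub> = act g \<one>\<^bsub>F\<^esub> \<otimes>\<^bsub>F\<^esub> act g \<one>\<^bsub>F\<^esub>"
    using act_F_mult[OF g F.one_closed F.one_closed] g by simp
  then show ?thesis
    using g by simp
qed

lemma inv_act: "g \<in> carrier G \<Longrightarrow> x \<in> carrier F \<Longrightarrow> inv\<^bsub>F\<^esub> (act g x) = act (ract g x) (inv\<^bsub>F\<^esub> x)"
proof -
  assume g: "g \<in> carrier G" and x: "x \<in> carrier F"
  have "act g x \<otimes>\<^bsub>F\<^esub> act (ract g x) (inv\<^bsub>F\<^esub> x) = \<one>\<^bsub>F\<^esub>"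
    using g x by (simp flip: act_F_mult)
  then show ?thesis
    using g x by (metis F.inv_comm F.inv_equality F.inv_closed act_closed ract_closed)
qed

definition orbit :: "'f \<Rightarrow> 'f set" where
  "orbit x = {act g x | g. g \<in> carrier G}"

lemma act_in_orbit:
  assumes "x \<in> carrier F" "y \<in> orbit x" "g \<in> carrier G"
  shows "act g y \<in> orbit x"
proof -
  obtain h where "h \<in> carrier G" "y = act h x"
    using assms(2) by (auto simp: orbit_def)
  then have "act g y = act (g \<otimes>\<^bsub>G\<^esub> h) x"
    using assms by (simp add: act_mult)
  then show ?thesis
    using assms \<open>h \<in> carrier G\<close> by (auto simp: orbit_def)
qed

lemma orbit_sym:
  assumes "x \<in> carrier F" "y \<in> orbit x"
  shows "x \<in> orbit y"
proof -
  obtain h where "h \<in> carrier G" "y = act h x"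
    using assms(2) by (auto simp: orbit_def)
  then have "x = act (inv\<^bsub>G\<^esub> h) y"
    using assms by simp
  then show ?thesis
    using \<open>h \<in> carrier G\<close> by (auto simp: orbit_def)
qed

lemma orbit_trans:
  assumes "x \<in> carrier F" "y \<in> orbit x" "z \<in> orbit y"
  shows "z \<in> orbit x"
proof -
  obtain h where "h \<in> carrier G" "z = act h y"
    using assms(3) by (auto simp: orbit_def)
  then show ?thesis
    using act_in_orbit[OF assms(1,2)] by simp
qed

lemma inv_in_orbit_inv:
  assumes "x \<in> carrier F" "y \<in> orbit x"
  shows "inv\<^bsub>F\<^esub> y \<in> orbit (inv\<^bsub>F\<^esub> x)"
  using assms by (auto simp: orbit_def inv_act)

lemma stab_act: "g \<in> stab F G act x \<Longrightarrow> act g x = x"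
  by (simp add: stab_def)

lemma stab_subgroup:
  assumes "x \<in> carrier F"
  shows "subgroup (stab F G act x) G"
proof
  show "stab F G act x \<subseteq> carrier G" by (auto simp: stab_def)
  show "\<one>\<^bsub>G\<^esub> \<in> stab F G act x" using assms by (simp add: stab_def)
  fix g h assume "g \<in> stab F G act x" and "h \<in> stab F G act x"
  then show "g \<otimes>\<^bsub>G\<^esub> h \<in> stab F G act x"
    using assms by (simp add: stab_def act_mult)
next
  fix g assume "g \<in> stab F G act x"
  then show "inv\<^bsub>G\<^esub> g \<in> stab F G act x"
    using assms act_inv_act[of g x] by (simp add: stab_def)
qed

lemma H_Dc_counit_right:
  assumes "g \<in> carrier G" "y \<in> carrier F"
  shows "H_Dc F G act \<tau> b (g, y) (\<one>\<^bsub>G\<^esub>, y) = (if b = (g, y) then 1 else 0)"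
  using assms by (cases b) (auto simp: H_Dc_def H_basis_def)

lemma sum_H_left_Hf:
  assumes "finite (vsupp X)" "x \<in> stab F G act f" "y \<in> carrier F" "g \<in> carrier G" "z \<in> carrier F"
  shows "(\<Sum>b\<in>vsupp X. sc (H_left_Hf F G act \<tau> f b (x, y) (g, z)) (X b)) =
           sc (if y = act g z then \<tau> x g z else 0) (X (x \<otimes>\<^bsub>G\<^esub> g, z))"
proof -
  have x: "x \<in> carrier G" using assms(2) by (simp add: stab_def)
  have "H_left_Hf F G act \<tau> f b (x, y) (g, z) =
          (if b = (x \<otimes>\<^bsub>G\<^esub> g, z) then (if y = act g z then \<tau> x g z else 0) else 0)" for b
    using assms x G.inv_solve_right[of x "fst b" g]
    by (cases b) (auto simp: H_left_Hf_def H_Dc_def Hf_basis_def H_basis_def G.m_assoc)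
  then show ?thesis
    by (subst sum_vsupp_sc_single[OF assms(1), where a = "(x \<otimes>\<^bsub>G\<^esub> g, z)"]) auto
qed

end

locale Gf_comodule = matched_pair F G act ract \<sigma> \<tau>
  for F :: "('f, 'x) monoid_scheme" and G :: "('g, 'y) monoid_scheme"
    and act :: "'g \<Rightarrow> 'f \<Rightarrow> 'f" and ract :: "'g \<Rightarrow> 'f \<Rightarrow> 'g"
    and \<sigma> :: "'g \<Rightarrow> 'f \<Rightarrow> 'f \<Rightarrow> 'k::field" and \<tau> :: "'g \<Rightarrow> 'g \<Rightarrow> 'f \<Rightarrow> 'k" +
  fixes f :: 'f and V :: "('a \<Rightarrow> 'k) set" and \<rho> :: "('a \<Rightarrow> 'k) \<Rightarrow> 'g \<Rightarrow> ('a \<Rightarrow> 'k)"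
  assumes f_closed: "f \<in> carrier F"
    and comodule: "right_comodule (stab F G act f) (Gf_Dc F G act \<tau> f) (Gf_eps G) V \<rho>"
begin

abbreviation G_f :: "'g set" where
  "G_f \<equiv> stab F G act f"

abbreviation V_induced :: "(('g \<times> 'f) \<times> 'a \<Rightarrow> 'k) set" where
  "V_induced \<equiv> induced_space F G act \<tau> f V \<rho>"

sublocale G_f: subgroup G_f G
  using stab_subgroup[OF f_closed] .

lemma Gf_coaction_coassoc:
  assumes "v \<in> V" "x \<in> G_f" "g \<in> G_f"
  shows "\<rho> (\<rho> v g) x = sc (\<tau> x g f) (\<rho> v (x \<otimes>\<^bsub>G\<^esub> g))"
proof -
  have "\<rho> (\<rho> v g) x = (\<Sum>b\<in>vsupp (\<rho> v). sc (Gf_Dc F G act \<tau> f b x g) (\<rho> v b))"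
    using comodule assms(1) by (simp add: right_comodule_def)
  also have "\<dots> = sc (Gf_Dc F G act \<tau> f (x \<otimes>\<^bsub>G\<^esub> g) x g) (\<rho> v (x \<otimes>\<^bsub>G\<^esub> g))"
  proof (rule sum_vsupp_sc_single)
    show "finite (vsupp (\<rho> v))"
      using comodule assms(1) by (simp add: right_comodule_def)
    show "Gf_Dc F G act \<tau> f b x g = 0" if "b \<noteq> x \<otimes>\<^bsub>G\<^esub> g" for b
      using that assms G.inv_solve_right[of x b g] by (auto simp: Gf_Dc_def)
  qed
  also have "Gf_Dc F G act \<tau> f (x \<otimes>\<^bsub>G\<^esub> g) x g = \<tau> x g f"
    using assms by (simp add: Gf_Dc_def G.m_assoc)
  finally show ?thesis .
qed

(* The cotensor condition, evaluated at c = p_x # y in H'_f and b' = p_g # z in H. *)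
lemma induced_space_iff:
  "Y \<in> V_induced \<longleftrightarrow>
     (\<forall>b. slice Y b \<in> V) \<and> finite (vsupp (slice Y)) \<and> vsupp (slice Y) \<subseteq> H_basis F G \<and>
     (\<forall>x\<in>G_f. \<forall>y\<in>carrier F. \<forall>g\<in>carrier G. \<forall>z\<in>carrier F.
        Vf_coaction f \<rho> (slice Y (g, z)) (x, y) =
        sc (if y = act g z then \<tau> x g z else 0) (slice Y (x \<otimes>\<^bsub>G\<^esub> g, z)))"
  using sum_H_left_Hf[of "slice Y"] by (auto simp: induced_space_def Hf_basis_def H_basis_def)

lemma induced_slice_support:
  assumes "Y \<in> V_induced" "slice Y (g, y) \<noteq> 0"
  shows "g \<in> carrier G" and "y \<in> carrier F" and "act g y = f"
proof -
  have cond: "vsupp (slice Y) \<subseteq> H_basis F G"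
    "\<forall>x\<in>G_f. \<forall>y\<in>carrier F. \<forall>g\<in>carrier G. \<forall>z\<in>carrier F.
        Vf_coaction f \<rho> (slice Y (g, z)) (x, y) =
        sc (if y = act g z then \<tau> x g z else 0) (slice Y (x \<otimes>\<^bsub>G\<^esub> g, z))"
    using assms(1) unfolding induced_space_iff by blast+
  then show g: "g \<in> carrier G" and y: "y \<in> carrier F"
    using assms(2) by (auto simp: vsupp_def H_basis_def)
  have "Vf_coaction f \<rho> (slice Y (g, y)) (\<one>\<^bsub>G\<^esub>, act g y) = slice Y (g, y)"
    using cond(2) g y by simp
  with assms(2) show "act g y = f"
    by (auto simp: Vf_coaction_def split: if_splits)
qed

lemma induced_slice_support_orbit:
  assumes "Y \<in> V_induced" "slice Y (g, z) \<noteq> 0"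
  shows "z \<in> orbit f"
proof -
  have "g \<in> carrier G" "z \<in> carrier F" "act g z = f"
    using induced_slice_support[OF assms] by simp_all
  then have "z = act (inv\<^bsub>G\<^esub> g) f"
    using act_inv_act[of g z] by simp
  then show ?thesis
    using \<open>g \<in> carrier G\<close> by (auto simp: orbit_def)
qed

definition induced_of :: "('a \<Rightarrow> 'k) \<Rightarrow> ('g \<times> 'f) \<times> 'a \<Rightarrow> 'k" where
  "induced_of v = (\<lambda>(b, a). if fst b \<in> G_f \<and> snd b = f then \<rho> v (fst b) a else 0)"

lemma slice_induced_of: "slice (induced_of v) (g, z) = (if g \<in> G_f \<and> z = f then \<rho> v g else 0)"
  by (auto simp: slice_def induced_of_def)

lemma induced_of_cotensor:
  assumes v: "v \<in> V" and x: "x \<in> G_f" and g: "g \<in> carrier G"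
  shows "Vf_coaction f \<rho> (slice (induced_of v) (g, z)) (x, y) =
           sc (if y = act g z then \<tau> x g z else 0) (slice (induced_of v) (x \<otimes>\<^bsub>G\<^esub> g, z))"
proof (cases "g \<in> G_f \<and> z = f")
  case True
  then have "act g z = f"
    using stab_act by simp \<comment> \<open>simp with stab_def would loop against G_f.mem_carrier\<close>
  then show ?thesis
    using True x Gf_coaction_coassoc[OF v x] by (simp add: slice_induced_of Vf_coaction_def)
next
  case False
  have "slice (induced_of v) (g, z) = 0"
    using False unfolding slice_induced_of by (rule if_not_P)
  moreover have "\<not> (x \<otimes>\<^bsub>G\<^esub> g \<in> G_f \<and> z = f)"
  proof
    assume "x \<otimes>\<^bsub>G\<^esub> g \<in> G_f \<and> z = f"
    then have "inv\<^bsub>G\<^esub> x \<otimes>\<^bsub>G\<^esub> (x \<otimes>\<^bsub>G\<^esub> g) \<in> G_f" and "z = f"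
      using x G_f.m_closed G_f.m_inv_closed by blast+
    moreover have "inv\<^bsub>G\<^esub> x \<otimes>\<^bsub>G\<^esub> (x \<otimes>\<^bsub>G\<^esub> g) = g"
      using G_f.mem_carrier[OF x] g G.inv_solve_left' by blast
    ultimately show False
      using False by simp
  qed
  then have "slice (induced_of v) (x \<otimes>\<^bsub>G\<^esub> g, z) = 0"
    unfolding slice_induced_of by (rule if_not_P)
  ultimately show ?thesis
    using right_comodule_coaction_zero[OF comodule] by (simp add: Vf_coaction_def)
qed

lemma induced_of_in_induced_space:
  assumes v: "v \<in> V"
  shows "induced_of v \<in> V_induced"
proof -
  have supp: "vsupp (slice (induced_of v)) \<subseteq> G_f \<times> {f}"
    by (auto simp: vsupp_def slice_induced_of)
  have "finite (G_f \<times> {f})"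
    using finite_subset[OF G_f.subset finite_carrier_G] by simp
  then have "finite (vsupp (slice (induced_of v)))"
    using supp finite_subset by blast
  moreover have "slice (induced_of v) b \<in> V" for b
    using comodule v by (cases b) (auto simp: slice_induced_of right_comodule_def subspace_def)
  moreover have "vsupp (slice (induced_of v)) \<subseteq> H_basis F G"
    using supp G_f.subset f_closed by (auto simp: H_basis_def)
  ultimately show ?thesis
    unfolding induced_space_iff using induced_of_cotensor[OF v] by blast
qed

lemma induced_space_nontrivial:
  assumes "V \<noteq> {0}"
  obtains Y g z where "Y \<in> V_induced" and "slice Y (g, z) \<noteq> 0"
proof -
  obtain v where v: "v \<in> V" "v \<noteq> 0"
    using assms comodule by (auto simp: right_comodule_def subspace_def)
  obtain g where "g \<in> G_f" and "\<rho> v g \<noteq> 0"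
    using right_comodule_coaction_nonzero[OF comodule v] .
  then have "slice (induced_of v) (g, f) \<noteq> 0"
    by (simp add: slice_induced_of)
  with induced_of_in_induced_space[OF v(1)] show thesis
    using that by blast
qed

lemma induced_coaction_support_counit:
  assumes "Y \<in> V_induced" "slice Y (g, z) \<noteq> 0"
  shows "(\<one>\<^bsub>G\<^esub>, z) \<in> coaction_support V_induced (induced_coaction F G act \<tau>)"
proof -
  have g: "g \<in> carrier G" and z: "z \<in> carrier F"
    using induced_slice_support[OF assms] by simp_all
  obtain a where a: "Y ((g, z), a) \<noteq> 0"
    using assms(2) by (auto simp: slice_def fun_eq_iff)
  have fin: "finite (vsupp (slice Y))" and gz: "(g, z) \<in> vsupp (slice Y)"
    using assms induced_space_iff by (auto simp: vsupp_def)
  have "induced_coaction F G act \<tau> Y (\<one>\<^bsub>G\<^esub>, z) ((g, z), a) =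
          (\<Sum>b\<in>vsupp (slice Y). if b = (g, z) then Y (b, a) else 0)"
    unfolding induced_coaction_def using H_Dc_counit_right[OF g z] by (auto intro: sum.cong)
  also have "\<dots> = Y ((g, z), a)"
    using fin gz by simp
  finally have "induced_coaction F G act \<tau> Y (\<one>\<^bsub>G\<^esub>, z) \<noteq> 0"
    using a by (metis zero_fun_apply)
  with assms(1) show ?thesis
    by (auto simp: coaction_support_def)
qed

lemma induced_coaction_support_orbit:
  assumes "b \<in> coaction_support V_induced (induced_coaction F G act \<tau>)"
  shows "snd b \<in> orbit f"
proof -
  obtain w b2 a where w: "w \<in> V_induced" and "induced_coaction F G act \<tau> w b (b2, a) \<noteq> 0"
    using assms by (auto simp: coaction_support_def fun_eq_iff)
  then obtain b1 where "b1 \<in> vsupp (slice w)" and "H_Dc F G act \<tau> b1 b2 b * w (b1, a) \<noteq> 0"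
    by (auto simp: induced_coaction_def intro: sum.not_neutral_contains_not_neutral)
  moreover obtain h y where "b1 = (h, y)"
    by (cases b1)
  ultimately have "slice w (h, y) \<noteq> 0" and "snd b = y"
    using H_Dc_nonzero_snd[of F G act \<tau> b1 b2 b] by (auto simp: vsupp_def)
  then show ?thesis
    using induced_slice_support_orbit[OF w] by simp
qed

end

theorem corollary5p7:
  fixes F :: "('f, 'x) monoid_scheme" and G :: "('g, 'y) monoid_scheme"
    and act :: "'g \<Rightarrow> 'f \<Rightarrow> 'f" and ract :: "'g \<Rightarrow> 'f \<Rightarrow> 'g"
    and \<sigma> :: "'g \<Rightarrow> 'f \<Rightarrow> 'f \<Rightarrow> 'k::field_char_0" and \<tau> :: "'g \<Rightarrow> 'g \<Rightarrow> 'f \<Rightarrow> 'k"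
    and f :: 'f
    and V :: "('a \<Rightarrow> 'k) set" and \<rho> :: "('a \<Rightarrow> 'k) \<Rightarrow> 'g \<Rightarrow> ('a \<Rightarrow> 'k)"
  assumes "alg_closed_field TYPE('k)"
    and "matched_pair_data F G act ract \<sigma> \<tau>"
    and "f \<in> carrier F"
    and "simple_right_comodule (stab F G act f) (Gf_Dc F G act \<tau> f) (Gf_eps G) V \<rho>"
    and "comodule_iso
           (dual_space (induced_space F G act \<tau> f V \<rho>))
           (dual_coaction (H_Sc F G act ract \<sigma> \<tau>) (induced_space F G act \<tau> f V \<rho>) (induced_coaction F G act \<tau>))
           (induced_space F G act \<tau> f V \<rho>)
           (induced_coaction F G act \<tau>)"
  shows "{g \<in> carrier G. act g f = inv\<^bsub>F\<^esub> f} \<noteq> {}"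
proof -
  interpret Gf_comodule F G act ract \<sigma> \<tau> f V \<rho>
    using assms(2,3,4) by unfold_locales (simp_all add: simple_right_comodule_def)
  have "V \<noteq> {0}"
    using assms(4) by (simp add: simple_right_comodule_def)
  then obtain Y g z where Y: "Y \<in> V_induced" "slice Y (g, z) \<noteq> 0"
    by (rule induced_space_nontrivial)
  have "(\<one>\<^bsub>G\<^esub>, z) \<in> coaction_support (dual_space V_induced)
          (dual_coaction (H_Sc F G act ract \<sigma> \<tau>) V_induced (induced_coaction F G act \<tau>))"
    using comodule_iso_coaction_support[OF assms(5)] induced_coaction_support_counit[OF Y] by blast
  then have "(\<one>\<^bsub>G\<^esub>, z) \<in> {b. \<exists>b'\<in>coaction_support V_induced (induced_coaction F G act \<tau>).
       H_Sc F G act ract \<sigma> \<tau> b' b \<noteq> 0}"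
    by (rule subsetD[OF dual_coaction_support])
  then obtain b where b: "b \<in> coaction_support V_induced (induced_coaction F G act \<tau>)"
    and Sc: "H_Sc F G act ract \<sigma> \<tau> b (\<one>\<^bsub>G\<^esub>, z) \<noteq> 0"
    by blast
  have "fst b \<in> carrier G" and z: "z = inv\<^bsub>F\<^esub> (act (fst b) (snd b))"
    using H_Sc_nonzero[OF Sc] by (auto simp: H_basis_def mem_Times_iff)
  have "act (fst b) (snd b) \<in> orbit f"
    using act_in_orbit[OF f_closed induced_coaction_support_orbit[OF b] \<open>fst b \<in> carrier G\<close>] .
  then have "z \<in> orbit (inv\<^bsub>F\<^esub> f)"
    unfolding z by (rule inv_in_orbit_inv[OF f_closed])
  then have "inv\<^bsub>F\<^esub> f \<in> orbit z"
    by (rule orbit_sym[OF F.inv_closed[OF f_closed]])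
  then have "inv\<^bsub>F\<^esub> f \<in> orbit f"
    by (rule orbit_trans[OF f_closed induced_slice_support_orbit[OF Y]])
  then show ?thesis
    by (auto simp: orbit_def)
qed

end
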